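(* Every statistically complete $S$-metric space is complete.
   Context: An $S$-metric on a nonempty set $X$ is a function $S:X^3\to[0,\infty)$ such that for all $x,y,z,a\in X$: $S(x,y,z)=0$ if and only if $x=y=z$, and $S(x,y,z)\le S(x,x,a)+S(y,y,a)+S(z,z,a)$. A sequence $\{x_n\}$ converges to $x$ if for every $\varepsilon>0$ there is $k$ with $S(x_n,x_n,x)<\varepsilon$ for all $n\ge k$; it is Cauchy if for every $\varepsilon>0$ there is $k$ with $S(x_n,x_n,x_m)<\varepsilon$ for all $n,m\ge k$; $(X,S)$ is complete if every Cauchy sequence converges. For $B\subset\mathbb N$ the natural density is $\delta(B)=\lim_{n\to\infty}\frac{|\{k\in B:k\le n\}|}{n}$ when the limit exists. A sequence $\{x_n\}$ is statistically convergent to $x\in X$ if for every $\varepsilon>0$, $\delta(\{n: S(x_n,x_n,x)\ge\varepsilon\})=0$; it is statistically Cauchy if for every $\varepsilon>0$ there exists $N\in\mathbb N$ with $\delta(\{n: S(x_n,x_n,x_N)\ge\varepsilon\})=0$. $(X,S)$ is statistically complete if every statistically Cauchy sequence in $X$ is statistically convergent (to some point of $X$). *)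

theory Defs
  imports "HOL-Analysis.Analysis"
begin

definition S_metric :: "'a set \<Rightarrow> ('a \<Rightarrow> 'a \<Rightarrow> 'a \<Rightarrow> real) \<Rightarrow> bool" where
  "S_metric X S \<longleftrightarrow> X \<noteq> {} \<and>
     (\<forall>x\<in>X. \<forall>y\<in>X. \<forall>z\<in>X. S x y z \<ge> 0) \<and>
     (\<forall>x\<in>X. \<forall>y\<in>X. \<forall>z\<in>X. S x y z = 0 \<longleftrightarrow> x = y \<and> y = z) \<and>
     (\<forall>x\<in>X. \<forall>y\<in>X. \<forall>z\<in>X. \<forall>a\<in>X. S x y z \<le> S x x a + S y y a + S z z a)"

definition S_converges :: "('a \<Rightarrow> 'a \<Rightarrow> 'a \<Rightarrow> real) \<Rightarrow> (nat \<Rightarrow> 'a) \<Rightarrow> 'a \<Rightarrow> bool" where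
  "S_converges S x l \<longleftrightarrow> (\<forall>\<epsilon>>0. \<exists>k. \<forall>n\<ge>k. S (x n) (x n) l < \<epsilon>)"

definition S_Cauchy :: "('a \<Rightarrow> 'a \<Rightarrow> 'a \<Rightarrow> real) \<Rightarrow> (nat \<Rightarrow> 'a) \<Rightarrow> bool" where
  "S_Cauchy S x \<longleftrightarrow> (\<forall>\<epsilon>>0. \<exists>k. \<forall>n\<ge>k. \<forall>m\<ge>k. S (x n) (x n) (x m) < \<epsilon>)"

definition S_complete :: "'a set \<Rightarrow> ('a \<Rightarrow> 'a \<Rightarrow> 'a \<Rightarrow> real) \<Rightarrow> bool" where
  "S_complete X S \<longleftrightarrow> (\<forall>x. (\<forall>n. x n \<in> X) \<longrightarrow> S_Cauchy S x \<longrightarrow> (\<exists>l\<in>X. S_converges S x l))"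

definition density_zero :: "nat set \<Rightarrow> bool" where
  "density_zero B \<longleftrightarrow> ((\<lambda>n. real (card {k\<in>B. 1 \<le> k \<and> k \<le> n}) / real n) \<longlonglongrightarrow> 0)"

definition S_stat_converges :: "('a \<Rightarrow> 'a \<Rightarrow> 'a \<Rightarrow> real) \<Rightarrow> (nat \<Rightarrow> 'a) \<Rightarrow> 'a \<Rightarrow> bool" where
  "S_stat_converges S x l \<longleftrightarrow> (\<forall>\<epsilon>>0. density_zero {n. S (x n) (x n) l \<ge> \<epsilon>})"

definition S_stat_Cauchy :: "('a \<Rightarrow> 'a \<Rightarrow> 'a \<Rightarrow> real) \<Rightarrow> (nat \<Rightarrow> 'a) \<Rightarrow> bool" where
  "S_stat_Cauchy S x \<longleftrightarrow> (\<forall>\<epsilon>>0. \<exists>N. density_zero {n. S (x n) (x n) (x N) \<ge> \<epsilon>})"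

definition S_stat_complete :: "'a set \<Rightarrow> ('a \<Rightarrow> 'a \<Rightarrow> 'a \<Rightarrow> real) \<Rightarrow> bool" where
  "S_stat_complete X S \<longleftrightarrow>
     (\<forall>x. (\<forall>n. x n \<in> X) \<longrightarrow> S_stat_Cauchy S x \<longrightarrow> (\<exists>l\<in>X. S_stat_converges S x l))"

end

theory Submission
  imports Defs
begin

text \<open>A Cauchy sequence is statistically Cauchy, because its exceptional sets are finite and
  finite sets have density zero; so it has a statistical limit \<open>l\<close>. The complement of a
  density-zero set is infinite, hence terms arbitrarily close to \<open>l\<close> occur arbitrarily late,
  and for a Cauchy sequence this already forces ordinary convergence to \<open>l\<close>.\<close>

lemma density_zero_finite:
  assumes "finite B"
  shows "density_zero B"
  unfolding density_zero_def
proof (rule tendsto_sandwich[where f="\<lambda>n. 0" and h="\<lambda>n. real (card B) / real n"])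
  show "\<forall>\<^sub>F n in sequentially. 0 \<le> real (card {k\<in>B. 1 \<le> k \<and> k \<le> n}) / real n"
    by simp
  have "card {k\<in>B. 1 \<le> k \<and> k \<le> n} \<le> card B" for n
    using assms by (intro card_mono) auto
  then show "\<forall>\<^sub>F n in sequentially.
      real (card {k\<in>B. 1 \<le> k \<and> k \<le> n}) / real n \<le> real (card B) / real n"
    by (intro always_eventually allI divide_right_mono) simp_all
qed (simp_all add: lim_const_over_n)

lemma density_zero_infinite_complement:
  assumes "density_zero B"
  shows "infinite (- B)"
proof
  assume "finite (- B)"
  then obtain k where "- B \<subseteq> {..<k}"
    using finite_nat_bounded by blast
  then have cofinite: "m \<in> B" if "m \<ge> k" for m
    using that by auto
  from assms have "\<forall>\<^sub>F n in sequentially. real (card {j\<in>B. 1 \<le> j \<and> j \<le> n}) / real n < 1/2"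
    unfolding density_zero_def by (rule order_tendstoD) simp
  then obtain M where M: "\<And>n. n \<ge> M \<Longrightarrow> real (card {j\<in>B. 1 \<le> j \<and> j \<le> n}) / real n < 1/2"
    by (auto simp: eventually_sequentially)
  define n where "n = M + 2 * (k + 1)"
  have "{k+1..n} \<subseteq> {j\<in>B. 1 \<le> j \<and> j \<le> n}"
    using cofinite by auto
  then have "real (n - k) \<le> real (card {j\<in>B. 1 \<le> j \<and> j \<le> n})"
    using card_mono[of _ "{k+1..n}"] by simp
  moreover have "real n / 2 \<le> real (n - k)" and "real n > 0"
    unfolding n_def by (simp_all add: of_nat_diff)
  ultimately have "1/2 \<le> real (card {j\<in>B. 1 \<le> j \<and> j \<le> n}) / real n"
    by (simp add: field_simps)
  with M[of n] show False
    unfolding n_def by simp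
qed

lemma S_metric_self:
  assumes "S_metric X S" "a \<in> X"
  shows "S a a a = 0"
  using assms unfolding S_metric_def by blast

lemma S_metric_triangle:
  assumes "S_metric X S" "x \<in> X" "y \<in> X" "z \<in> X" "a \<in> X"
  shows "S x y z \<le> S x x a + S y y a + S z z a"
proof -
  have "\<forall>x\<in>X. \<forall>y\<in>X. \<forall>z\<in>X. \<forall>a\<in>X. S x y z \<le> S x x a + S y y a + S z z a"
    using assms(1) unfolding S_metric_def by (elim conjE)
  then show ?thesis
    using assms(2-5) by blast
qed

lemma S_metric_sym:
  assumes "S_metric X S" "a \<in> X" "b \<in> X"
  shows "S a a b = S b b a"
  using S_metric_triangle[OF assms(1), of a a b a] S_metric_triangle[OF assms(1), of b b a b]
    S_metric_self[OF assms(1)] assms(2,3)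
  by simp

lemma S_Cauchy_imp_S_stat_Cauchy:
  assumes "S_Cauchy S x"
  shows "S_stat_Cauchy S x"
  unfolding S_stat_Cauchy_def
proof (intro allI impI)
  fix e :: real
  assume "e > 0"
  with assms obtain k where k: "\<And>n m. n \<ge> k \<Longrightarrow> m \<ge> k \<Longrightarrow> S (x n) (x n) (x m) < e"
    unfolding S_Cauchy_def by blast
  have "{n. S (x n) (x n) (x k) \<ge> e} \<subseteq> {..<k}"
    using k[of _ k] by (auto simp: not_less[symmetric])
  then show "\<exists>N. density_zero {n. S (x n) (x n) (x N) \<ge> e}"
    using density_zero_finite finite_subset by blast
qed

lemma S_Cauchy_converges_if_frequently_close:
  assumes "S_metric X S" "\<forall>n. x n \<in> X" "l \<in> X" "S_Cauchy S x"
    and close: "\<And>e. e > 0 \<Longrightarrow> \<exists>\<^sub>F m in sequentially. S (x m) (x m) l < e"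
  shows "S_converges S x l"
  unfolding S_converges_def
proof (intro allI impI)
  fix e :: real
  assume "e > 0"
  with \<open>S_Cauchy S x\<close> obtain k where k: "\<And>n m. n \<ge> k \<Longrightarrow> m \<ge> k \<Longrightarrow> S (x n) (x n) (x m) < e/4"
    unfolding S_Cauchy_def by (meson divide_pos_pos zero_less_numeral)
  from close[of "e/2"] \<open>e > 0\<close> obtain m where m: "m \<ge> k" "S (x m) (x m) l < e/2"
    by (auto simp: frequently_sequentially)
  have "S (x n) (x n) l < e" if "n \<ge> k" for n
  proof -
    have "S (x n) (x n) l \<le> S (x n) (x n) (x m) + S (x n) (x n) (x m) + S l l (x m)"
      using S_metric_triangle[OF assms(1), of "x n" "x n" l "x m"] assms(2,3) by simp
    also have "S l l (x m) = S (x m) (x m) l"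
      using S_metric_sym[OF assms(1), of l "x m"] assms(2,3) by simp
    finally show ?thesis
      using k[OF that m(1)] m(2) by simp
  qed
  then show "\<exists>k. \<forall>n\<ge>k. S (x n) (x n) l < e"
    by blast
qed

lemma S_stat_converges_frequently_close:
  assumes "S_stat_converges S x l" "e > 0"
  shows "\<exists>\<^sub>F m in sequentially. S (x m) (x m) l < e"
proof -
  have "infinite (- {n. S (x n) (x n) l \<ge> e})"
    using assms density_zero_infinite_complement unfolding S_stat_converges_def by blast
  then show ?thesis
    by (simp add: frequently_sequentially infinite_nat_iff_unbounded_le not_le)
qed

theorem theorem3p6:
  fixes X :: "'a set" and S :: "'a \<Rightarrow> 'a \<Rightarrow> 'a \<Rightarrow> real"
  assumes "S_metric X S"
    and "S_stat_complete X S"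
  shows "S_complete X S"
  unfolding S_complete_def
proof (intro allI impI)
  fix x
  assume x: "\<forall>n. x n \<in> X" and Cauchy: "S_Cauchy S x"
  then obtain l where l: "l \<in> X" "S_stat_converges S x l"
    using assms(2) S_Cauchy_imp_S_stat_Cauchy unfolding S_stat_complete_def by blast
  have "S_converges S x l"
    using S_Cauchy_converges_if_frequently_close[OF assms(1) x l(1) Cauchy]
      S_stat_converges_frequently_close[OF l(2)] by blast
  with l(1) show "\<exists>l\<in>X. S_converges S x l" ..
qed

end
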